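(* Let $d,k$ be integers with $2\leq d\leq\frac{k+1}{2}$, $\Sigma_k=\{\sigma_1,\ldots,\sigma_k\}$, $\Sigma_d=\{\sigma_1,\ldots,\sigma_d\}$. Consider $r\geq2$ users over $\Sigma_k$, where user 1 has confusion graph $G_1=(\Sigma_k,\{ab\mid a\in\Sigma_k,\ b\in\Sigma_k\setminus\Sigma_d,\ a\neq b\})$ and users $2,\ldots,r$ have confusion graphs $G_2,\ldots,G_r$ each containing (as edge sets) the complement $\overline{G_1}=(\Sigma_k,\{ab\mid a,b\in\Sigma_d,\ a\neq b\})$. If $(\alpha\log_2 d,R_2,\ldots,R_r)$ with $\alpha\in[0,1]$ is a feasible rate vector, then $\sum_{i=2}^r R_i\leq(1-\alpha)\log_2(k-d+1)$.
   Context: Setting: a sender broadcasts a word of length $n$ over a finite alphabet $\Sigma$ to $r$ users; user $i$ has a confusion graph $G_i$ on vertex set $\Sigma$, where $ab$ is an edge iff user $i$ cannot distinguish letters $a$ and $b$. Two words $x,y\in\Sigma^n$ are distinguishable by user $i$ if there is a coordinate $t$ with $x_t\neq y_t$ and $x_ty_t$ not an edge of $G_i$. A vector $(m_1,\ldots,m_r)$ of positive integers is feasible for length $n$ if there is a map $E:[m_1]\times\cdots\times[m_r]\to\Sigma^n$ such that for every $i$ and all tuples $a,a'$ with $a_i\neq a'_i$, $E(a)$ and $E(a')$ are distinguishable by user $i$. A rate vector $(R_1,\ldots,R_r)$ is feasible if there is a sequence of feasible vectors for lengths $n\to\infty$ with $R_i=\lim_{n\to\infty}\frac{\log_2 m_i^{(n)}}{n}$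 for all $i$. *)

theory Defs
  imports "HOL-Analysis.Analysis"
begin

text \<open>Alphabet letters are natural numbers; a confusion graph is a binary relation
  on letters (edge relation). Words of length n are functions nat \<Rightarrow> nat, only the
  coordinates t < n matter.\<close>

definition distinguishable :: "(nat \<Rightarrow> nat \<Rightarrow> bool) \<Rightarrow> nat \<Rightarrow> (nat \<Rightarrow> nat) \<Rightarrow> (nat \<Rightarrow> nat) \<Rightarrow> bool" where
  "distinguishable G n x y \<longleftrightarrow> (\<exists>t<n. x t \<noteq> y t \<and> \<not> G (x t) (y t))"

definition feasible_vector ::
  "nat set \<Rightarrow> (nat \<Rightarrow> nat \<Rightarrow> nat \<Rightarrow> bool) \<Rightarrow> nat \<Rightarrow> nat \<Rightarrow> (nat \<Rightarrow> nat) \<Rightarrow> bool" where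
  "feasible_vector \<Sigma> G r n m \<longleftrightarrow>
     (\<forall>i\<in>{1..r}. m i \<ge> 1) \<and>
     (\<exists>E :: (nat \<Rightarrow> nat) \<Rightarrow> (nat \<Rightarrow> nat).
        (\<forall>a \<in> Pi\<^sub>E {1..r} (\<lambda>i. {..<m i}). \<forall>t<n. E a t \<in> \<Sigma>) \<and>
        (\<forall>i\<in>{1..r}. \<forall>a \<in> Pi\<^sub>E {1..r} (\<lambda>i. {..<m i}). \<forall>a' \<in> Pi\<^sub>E {1..r} (\<lambda>i. {..<m i}).
            a i \<noteq> a' i \<longrightarrow> distinguishable (G i) n (E a) (E a')))"

definition feasible_rate ::
  "nat set \<Rightarrow> (nat \<Rightarrow> nat \<Rightarrow> nat \<Rightarrow> bool) \<Rightarrow> nat \<Rightarrow> (nat \<Rightarrow> real) \<Rightarrow> bool" where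
  "feasible_rate \<Sigma> G r R \<longleftrightarrow>
     (\<exists>(N :: nat \<Rightarrow> nat) (M :: nat \<Rightarrow> nat \<Rightarrow> nat).
        filterlim N at_top sequentially \<and>
        (\<forall>j. feasible_vector \<Sigma> G r (N j) (M j)) \<and>
        (\<forall>i\<in>{1..r}. (\<lambda>j. log 2 (real (M j i)) / real (N j)) \<longlonglongrightarrow> R i))"

end

theory Submission
  imports Defs
begin

text \<open>For a message a of user 1 let U(a) be the set of words over the first d letters that
  user 1 confuses with some codeword carrying a; these sets are pairwise disjoint subsets of
  [d]^n. Users 2, ..., r confuse all letters below d, so their messages are told apart by the
  patterns of the codewords alone (letters below d blanked out). Hence m_2 \<cdot> ... \<cdot> m_r is at
  most the number of patterns compatible with U(a), which is at most |U(a)|^s for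
  d^s = k + 1 - d, by induction on n and convexity of x^s. Summing over a gives
  m_1 (m_2 \<cdot> ... \<cdot> m_r)^(1/s) \<le> d^n; taking logarithms and passing to the limit yields
  R_1 + (R_2 + ... + R_r) / s \<le> log d, and s log d = log (k + 1 - d).\<close>

lemma convex_on_increment_mono:
  fixes f :: "real \<Rightarrow> real"
  assumes f: "convex_on I f" and I: "a \<in> I" "b + e \<in> I" and "a \<le> b" "0 \<le> e"
  shows "f (a + e) - f a \<le> f (b + e) - f b"
proof (cases "e = 0")
  case False
  define t where "t = e / (b + e - a)"
  have t: "0 \<le> t" "t \<le> 1" and te: "t * (b + e - a) = e"
    using False assms(4,5) by (auto simp: t_def field_simps)
  have "f ((1 - t) *\<^sub>R a + t *\<^sub>R (b + e)) \<le> (1 - t) * f a + t * f (b + e)"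
    using convex_onD[OF f t I] .
  moreover have "f ((1 - (1 - t)) *\<^sub>R a + (1 - t) *\<^sub>R (b + e)) \<le> t * f a + (1 - t) * f (b + e)"
    using convex_onD[OF f _ _ I, of "1 - t"] t by simp
  moreover have "(1 - t) *\<^sub>R a + t *\<^sub>R (b + e) = a + e"
    and "(1 - (1 - t)) *\<^sub>R a + (1 - t) *\<^sub>R (b + e) = b"
    using te by (simp_all add: algebra_simps)
  ultimately have "f (a + e) \<le> (1 - t) * f a + t * f (b + e)" "f b \<le> t * f a + (1 - t) * f (b + e)"
    by simp_all
  then show ?thesis by (simp add: algebra_simps)
qed simp

lemma convex_on_powr_nonneg:
  assumes "1 \<le> s"
  shows "convex_on {0..} (\<lambda>x::real. x powr s)"
proof (rule convex_onI)
  fix t x y :: real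
  assume t: "0 < t" "t < 1" and xy: "x \<in> {0..}" "y \<in> {0..}"
  have shrink: "u powr s * z powr s \<le> u * z powr s" if "0 \<le> u" "u \<le> 1" for u z :: real
    using that assms powr_mono'[of 1 s u] by (intro mult_right_mono) auto
  show "((1 - t) *\<^sub>R x + t *\<^sub>R y) powr s \<le> (1 - t) * x powr s + t * y powr s"
  proof (cases "x = 0 \<or> y = 0")
    case True
    with xy t shrink[of t y] shrink[of "1 - t" x] show ?thesis
      by (auto simp: powr_mult)
  next
    case False
    with xy t show ?thesis
      using convex_onD[OF powr_convex[OF assms], of t x y] by simp
  qed
qed (simp add: convex_real_interval)

lemma sum_powr_increments_le:
  fixes e :: "'a \<Rightarrow> real"
  assumes "finite V" "1 \<le> s" "0 \<le> i" "i \<le> a" "\<And>v. v \<in> V \<Longrightarrow> 0 \<le> e v"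
  shows "(\<Sum>v\<in>V. (i + e v) powr s - i powr s) \<le> (a + (\<Sum>v\<in>V. e v)) powr s - a powr s"
  using assms(1,5,4)
proof (induction V arbitrary: a rule: finite_induct)
  case (insert w V)
  let ?a' = "a + (\<Sum>v\<in>V. e v)"
  have "0 \<le> (\<Sum>v\<in>V. e v)"
    using insert by (intro sum_nonneg) auto
  then have "(i + e w) powr s - i powr s \<le> (?a' + e w) powr s - ?a' powr s"
    using insert assms(3) by (intro convex_on_increment_mono[OF convex_on_powr_nonneg[OF assms(2)]]) auto
  moreover have "(\<Sum>v\<in>V. (i + e v) powr s - i powr s) \<le> ?a' powr s - a powr s"
    using insert by simp
  ultimately show ?case
    using insert.hyps by (simp add: algebra_simps)
qed simp

lemma powr_sum_lower_bound:
  fixes u :: "nat \<Rightarrow> real"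
  assumes "1 \<le> d" "1 \<le> s" "0 \<le> i" "\<And>v. v < d \<Longrightarrow> i \<le> u v"
  shows "(real d powr s - d) * i powr s + (\<Sum>v<d. u v powr s) \<le> (\<Sum>v<d. u v) powr s"
proof -
  have "(\<Sum>v<d. (i + (u v - i)) powr s - i powr s)
        \<le> (real d * i + (\<Sum>v<d. u v - i)) powr s - (real d * i) powr s"
    using assms mult_le_cancel_right1[of i "real d"] by (intro sum_powr_increments_le) auto
  moreover have "(real d * i) powr s = real d powr s * i powr s"
    using assms by (simp add: powr_mult)
  ultimately show ?thesis
    by (simp add: sum_subtractf algebra_simps)
qed

text \<open>The words over the first d letters that user 1 cannot distinguish from x.\<close>

definition shadow :: "nat \<Rightarrow> nat \<Rightarrow> (nat \<Rightarrow> nat) \<Rightarrow> (nat \<Rightarrow> nat) set" where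
  "shadow d n x = {y \<in> PiE {..<n} (\<lambda>_. {..<d}). \<forall>t<n. x t < d \<longrightarrow> y t = x t}"

text \<open>The part of x that matters to users 2,...,r: letters below d become the fresh symbol k.\<close>

definition pattern :: "nat \<Rightarrow> nat \<Rightarrow> nat \<Rightarrow> (nat \<Rightarrow> nat) \<Rightarrow> (nat \<Rightarrow> nat)" where
  "pattern d k n x = restrict (\<lambda>t. if x t < d then k else x t) {..<n}"

definition patterns_in :: "nat \<Rightarrow> nat \<Rightarrow> nat \<Rightarrow> (nat \<Rightarrow> nat) set \<Rightarrow> (nat \<Rightarrow> nat) set" where
  "patterns_in d k n U = pattern d k n ` {x. (\<forall>t<n. x t < k) \<and> shadow d n x \<subseteq> U}"

definition slice :: "(nat \<Rightarrow> nat) set \<Rightarrow> nat \<Rightarrow> nat \<Rightarrow> (nat \<Rightarrow> nat) set" where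
  "slice U n v = (\<lambda>y. restrict y {..<n}) ` {y \<in> U. y n = v}"

lemma shadow_subset: "shadow d n x \<subseteq> PiE {..<n} (\<lambda>_. {..<d})"
  by (auto simp: shadow_def)

lemma shadow_Suc_extend:
  assumes "y \<in> shadow d n x" "v < d" "x n < d \<Longrightarrow> v = x n"
  shows "y(n := v) \<in> shadow d (Suc n) x"
  using assms by (auto simp: shadow_def PiE_iff less_Suc_eq extensional_def)

lemma pattern_Suc: "pattern d k (Suc n) x = (pattern d k n x)(n := (if x n < d then k else x n))"
  by (auto simp: pattern_def fun_eq_iff)

lemma patterns_in_subset: "patterns_in d k n U \<subseteq> PiE {..<n} (\<lambda>_. {..k})"
  by (auto simp: patterns_in_def pattern_def PiE_iff split: if_splits)

lemma finite_patterns_in: "finite (patterns_in d k n U)"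
  by (rule finite_subset[OF patterns_in_subset]) (simp add: finite_PiE)

lemma patterns_in_mono: "U \<subseteq> V \<Longrightarrow> patterns_in d k n U \<subseteq> patterns_in d k n V"
  by (auto simp: patterns_in_def)

lemma slice_subset: "U \<subseteq> PiE {..<Suc n} S \<Longrightarrow> slice U n v \<subseteq> PiE {..<n} S"
  by (auto simp: slice_def PiE_iff split: if_splits)

lemma sum_card_slice_le:
  assumes "finite U"
  shows "(\<Sum>v<d. card (slice U n v)) \<le> card U"
proof -
  have "(\<Sum>v<d. card (slice U n v)) \<le> (\<Sum>v<d. card {y \<in> U. y n = v})"
    unfolding slice_def by (intro sum_mono card_image_le) (simp add: assms)
  also have "\<dots> = card (\<Union>v<d. {y \<in> U. y n = v})"
    using assms by (intro card_UN_disjoint[symmetric]) auto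
  also have "\<dots> \<le> card U"
    using assms by (intro card_mono) auto
  finally show ?thesis .
qed

lemma patterns_in_Suc_subset:
  "patterns_in d k (Suc n) U \<subseteq>
     (\<lambda>(c, l). c(n := l)) ` (patterns_in d k n (\<Inter>v<d. slice U n v) \<times> {d..<k}) \<union>
     (\<lambda>c. c(n := k)) ` (\<Union>v<d. patterns_in d k n (slice U n v))"
  (is "_ \<subseteq> ?A \<union> ?B")
proof
  fix c assume "c \<in> patterns_in d k (Suc n) U"
  then obtain x where c: "c = pattern d k (Suc n) x" and xk: "\<forall>t<Suc n. x t < k"
    and xU: "shadow d (Suc n) x \<subseteq> U"
    by (auto simp: patterns_in_def)
  have in_slice: "y \<in> slice U n v" if "y \<in> shadow d n x" "v < d" "x n < d \<Longrightarrow> v = x n" for y v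
  proof -
    have "y(n := v) \<in> U"
      using shadow_Suc_extend[OF that] xU by blast
    moreover have "restrict (y(n := v)) {..<n} = y"
      using that(1) shadow_subset by fastforce
    ultimately show ?thesis
      unfolding slice_def by (intro image_eqI[where x = "y(n := v)"]) auto
  qed
  have xk': "\<forall>t<n. x t < k"
    using xk by simp
  show "c \<in> ?A \<union> ?B"
  proof (cases "x n < d")
    case True
    have "shadow d n x \<subseteq> slice U n (x n)"
      using in_slice True by blast
    then have "pattern d k n x \<in> patterns_in d k n (slice U n (x n))"
      using xk' unfolding patterns_in_def by blast
    then have "c \<in> ?B"
      using True by (auto simp: c pattern_Suc)
    then show ?thesis ..
  next
    case False
    \<comment> \<open>a last letter outside the first d leaves that coordinate free in the shadow\<close>
    have "shadow d n x \<subseteq> (\<Inter>v<d. slice U n v)"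
      using in_slice False by blast
    then have "pattern d k n x \<in> patterns_in d k n (\<Inter>v<d. slice U n v)"
      using xk' unfolding patterns_in_def by blast
    moreover have "x n \<in> {d..<k}"
      using False xk by auto
    ultimately show ?thesis
      using False c pattern_Suc[of d k n x]
      by (auto intro!: image_eqI[where x = "(pattern d k n x, x n)"])
  qed
qed

lemma card_patterns_in_Suc_le:
  assumes "d \<le> k"
  shows "real (card (patterns_in d k (Suc n) U))
    \<le> (real k + 1 - 2 * real d) * card (patterns_in d k n (\<Inter>v<d. slice U n v))
       + (\<Sum>v<d. real (card (patterns_in d k n (slice U n v))))"
proof -
  define I where "I = (\<Inter>v<d. slice U n v)"
  define fI where "fI = card (patterns_in d k n I)"
  define f where "f v = card (patterns_in d k n (slice U n v))" for v
  have fI_le: "fI \<le> f v" if "v < d" for v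
    using that finite_patterns_in unfolding fI_def f_def I_def
    by (intro card_mono patterns_in_mono) auto
  have card_extended: "card ((\<lambda>(c, l). c(n := l)) ` (patterns_in d k n I \<times> {d..<k})) \<le> fI * (k - d)"
    unfolding fI_def by (rule order_trans[OF card_image_le]) (auto simp: finite_patterns_in)
  have "card (\<Union>v<d. patterns_in d k n (slice U n v))
      \<le> card (patterns_in d k n I \<union> (\<Union>v<d. patterns_in d k n (slice U n v) - patterns_in d k n I))"
    by (intro card_mono) (auto simp: finite_patterns_in)
  also have "\<dots> \<le> fI + (\<Sum>v<d. card (patterns_in d k n (slice U n v) - patterns_in d k n I))"
    unfolding fI_def by (intro order_trans[OF card_Un_le] add_left_mono card_UN_le) simp
  also have "\<dots> = fI + (\<Sum>v<d. f v - fI)"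
    unfolding f_def fI_def I_def
    by (intro arg_cong2[where f = "(+)"] sum.cong refl)
      (simp add: card_Diff_subset finite_patterns_in patterns_in_mono INF_lower)
  finally have card_starred: "card ((\<lambda>c. c(n := k)) ` (\<Union>v<d. patterns_in d k n (slice U n v)))
      \<le> fI + (\<Sum>v<d. f v - fI)"
    by (rule order_trans[rotated, OF _ card_image_le]) (simp add: finite_patterns_in)
  have "card (patterns_in d k (Suc n) U)
      \<le> card ((\<lambda>(c, l). c(n := l)) ` (patterns_in d k n I \<times> {d..<k})
           \<union> (\<lambda>c. c(n := k)) ` (\<Union>v<d. patterns_in d k n (slice U n v)))"
    unfolding I_def by (intro card_mono patterns_in_Suc_subset) (simp add: finite_patterns_in)
  also have "\<dots> \<le> fI * (k - d) + (fI + (\<Sum>v<d. f v - fI))"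
    using card_extended card_starred by (intro order_trans[OF card_Un_le] add_mono)
  finally have "real (card (patterns_in d k (Suc n) U)) \<le> real (fI * (k - d) + (fI + (\<Sum>v<d. f v - fI)))"
    by (simp only: of_nat_le_iff)
  also have "\<dots> = real fI * real (k - d) + real fI + real (\<Sum>v<d. f v - fI)"
    by (simp only: of_nat_add of_nat_mult add.assoc)
  also have "real (\<Sum>v<d. f v - fI) = (\<Sum>v<d. real (f v)) - real d * fI"
    using fI_le by (simp add: of_nat_diff sum_subtractf)
  also have "real (k - d) = real k - real d"
    using assms by simp
  finally have "real (card (patterns_in d k (Suc n) U)) \<le> real fI * (real k - real d) + real fI
      + ((\<Sum>v<d. real (f v)) - real d * real fI)" .
  then show ?thesis
    unfolding fI_def f_def I_def by (simp add: algebra_simps)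
qed

lemma card_patterns_in_le:
  assumes "U \<subseteq> PiE {..<n} (\<lambda>_. {..<d})" and "1 \<le> d" "2 * d \<le> k + 1" "1 \<le> s"
    and d_powr: "real d powr s = real k + 1 - real d"
  shows "real (card (patterns_in d k n U)) \<le> real (card U) powr s"
  using assms(1)
proof (induction n arbitrary: U)
  case 0
  have "patterns_in d k 0 U \<subseteq> (if U = {} then {} else {\<lambda>_. undefined})"
    by (auto simp: patterns_in_def shadow_def pattern_def)
  moreover have "U \<subseteq> {\<lambda>_. undefined}"
    using 0 by auto
  ultimately show ?case
    by (cases "U = {}") (auto simp: subset_singleton_iff)
next
  case (Suc n)
  define I where "I = (\<Inter>v<d. slice U n v)"
  have finite_U: "finite U"
    using Suc.prems by (rule finite_subset) (simp add: finite_PiE)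
  have slice_in: "slice U n v \<subseteq> PiE {..<n} (\<lambda>_. {..<d})" for v
    using Suc.prems by (rule slice_subset)
  have I_in: "I \<subseteq> PiE {..<n} (\<lambda>_. {..<d})"
    unfolding I_def using slice_in \<open>1 \<le> d\<close> by (intro INF_lower2[of 0]) auto
  have finite_slice: "finite (slice U n v)" for v
    unfolding slice_def using finite_U by simp
  have "real (card (patterns_in d k (Suc n) U))
      \<le> (real d powr s - real d) * card (patterns_in d k n I)
         + (\<Sum>v<d. real (card (patterns_in d k n (slice U n v))))"
    using card_patterns_in_Suc_le[of d k n U] assms d_powr unfolding I_def by simp
  also have "\<dots> \<le> (real d powr s - real d) * real (card I) powr s
         + (\<Sum>v<d. real (card (slice U n v)) powr s)"
    using Suc.IH slice_in I_in d_powr assms(3) \<open>1 \<le> d\<close>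
    by (intro add_mono mult_left_mono sum_mono) (auto simp: I_def)
  also have "\<dots> \<le> (\<Sum>v<d. real (card (slice U n v))) powr s"
  proof (intro powr_sum_lower_bound)
    show "real (card I) \<le> real (card (slice U n v))" if "v < d" for v
      using that finite_slice unfolding I_def by (intro of_nat_mono card_mono INF_lower) auto
  qed (use assms in auto)
  also have "\<dots> \<le> real (card U) powr s"
    using sum_card_slice_le[OF finite_U, where d = d and n = n] assms
    by (intro powr_mono2) (auto simp flip: of_nat_sum)
  finally show ?case .
qed

lemma shadows_disjoint_if_distinguishable:
  assumes "distinguishable G n x y" "\<forall>t<n. x t < k" "\<forall>t<n. y t < k"
    and "\<And>a b. a < k \<Longrightarrow> b < k \<Longrightarrow> a \<noteq> b \<Longrightarrow> \<not> G a b \<Longrightarrow> a < d \<and> b < d"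
  shows "shadow d n x \<inter> shadow d n y = {}"
proof -
  obtain t where "t < n" "x t \<noteq> y t" "\<not> G (x t) (y t)"
    using assms(1) unfolding distinguishable_def by blast
  with assms(2-4) show ?thesis
    by (fastforce simp: shadow_def)
qed

lemma patterns_differ_if_distinguishable:
  assumes "distinguishable G n x y" "\<forall>t<n. x t < k" "\<forall>t<n. y t < k"
    and "\<And>a b. a < d \<Longrightarrow> b < d \<Longrightarrow> a \<noteq> b \<Longrightarrow> G a b"
  shows "pattern d k n x \<noteq> pattern d k n y"
proof -
  obtain t where t: "t < n" "x t \<noteq> y t" "\<not> G (x t) (y t)"
    using assms(1) unfolding distinguishable_def by blast
  then have "pattern d k n x t \<noteq> pattern d k n y t"
    using assms(2-4) by (auto simp: pattern_def)
  then show ?thesis by metis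
qed

lemma prod_le_card_patterns_in:
  fixes E :: "(nat \<Rightarrow> nat) \<Rightarrow> nat \<Rightarrow> nat" and m :: "nat \<Rightarrow> nat" and r :: nat
  defines "Msg \<equiv> PiE {1..r} (\<lambda>i. {..<m i})"
  assumes "1 \<le> r" "a\<^sub>1 < m 1"
    and E_word: "\<And>a. a \<in> Msg \<Longrightarrow> \<forall>t<n. E a t < k"
    and E_dist: "\<And>i a a'. i \<in> {2..r} \<Longrightarrow> a \<in> Msg \<Longrightarrow> a' \<in> Msg \<Longrightarrow> a i \<noteq> a' i
                   \<Longrightarrow> distinguishable (G i) n (E a) (E a')"
    and G_rest: "\<And>i a b. i \<in> {2..r} \<Longrightarrow> a < d \<Longrightarrow> b < d \<Longrightarrow> a \<noteq> b \<Longrightarrow> G i a b"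
  shows "(\<Prod>i\<in>{2..r}. m i)
    \<le> card (patterns_in d k n (\<Union>a \<in> {a \<in> Msg. a 1 = a\<^sub>1}. shadow d n (E a)))"
proof -
  let ?B = "PiE {2..r} (\<lambda>i. {..<m i})"
  define h where "h b = pattern d k n (E (b(1 := a\<^sub>1)))" for b
  have msg: "b(1 := a\<^sub>1) \<in> Msg" if "b \<in> ?B" for b
    using that assms(2,3) by (auto simp: Msg_def PiE_iff extensional_def)
  have "h b \<in> patterns_in d k n (\<Union>a \<in> {a \<in> Msg. a 1 = a\<^sub>1}. shadow d n (E a))"
    if "b \<in> ?B" for b
  proof -
    have "shadow d n (E (b(1 := a\<^sub>1))) \<subseteq> (\<Union>a \<in> {a \<in> Msg. a 1 = a\<^sub>1}. shadow d n (E a))"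
      using msg[OF that] by auto
    then show ?thesis
      unfolding h_def patterns_in_def using E_word[OF msg[OF that]] by blast
  qed
  moreover have "inj_on h ?B"
  proof (rule inj_onI, rule ccontr)
    fix b b' assume b: "b \<in> ?B" "b' \<in> ?B" and "h b = h b'" "b \<noteq> b'"
    then obtain i where i: "i \<in> {2..r}" "b i \<noteq> b' i"
      by (metis PiE_ext)
    then have "distinguishable (G i) n (E (b(1 := a\<^sub>1))) (E (b'(1 := a\<^sub>1)))"
      using E_dist msg b by auto
    moreover have "\<forall>t<n. E (b(1 := a\<^sub>1)) t < k" "\<forall>t<n. E (b'(1 := a\<^sub>1)) t < k"
      using E_word msg b by auto
    ultimately have "h b \<noteq> h b'"
      unfolding h_def using patterns_differ_if_distinguishable G_rest[OF i(1)] by blast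
    then show False
      using \<open>h b = h b'\<close> by contradiction
  qed
  ultimately have "card ?B \<le> card (patterns_in d k n (\<Union>a \<in> {a \<in> Msg. a 1 = a\<^sub>1}. shadow d n (E a)))"
    using finite_patterns_in by (intro card_inj_on_le) auto
  then show ?thesis
    by (simp add: card_PiE)
qed

lemma feasible_vector_product_bound:
  assumes "1 \<le> r" and d: "1 \<le> d" "2 * d \<le> k + 1"
    and s: "1 \<le> s" "real d powr s = real k + 1 - real d"
    and G1: "\<And>a b. a < k \<Longrightarrow> b < k \<Longrightarrow> a \<noteq> b \<Longrightarrow> \<not> G 1 a b \<Longrightarrow> a < d \<and> b < d"
    and G_rest: "\<And>i a b. i \<in> {2..r} \<Longrightarrow> a < d \<Longrightarrow> b < d \<Longrightarrow> a \<noteq> b \<Longrightarrow> G i a b"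
    and "feasible_vector {..<k} G r n m"
  shows "real (m 1) * (\<Prod>i\<in>{2..r}. real (m i)) powr (1 / s) \<le> real d ^ n"
proof -
  let ?Msg = "PiE {1..r} (\<lambda>i. {..<m i})"
  let ?Q = "PiE {..<n} (\<lambda>_. {..<d})"
  obtain E where E_word: "\<forall>a \<in> ?Msg. \<forall>t<n. E a t \<in> {..<k}"
    and E_dist: "\<forall>i\<in>{1..r}. \<forall>a \<in> ?Msg. \<forall>a' \<in> ?Msg. a i \<noteq> a' i
                   \<longrightarrow> distinguishable (G i) n (E a) (E a')"
    using assms(8) unfolding feasible_vector_def by (elim conjE exE)
  have E_word': "\<forall>t<n. E a t < k" if "a \<in> ?Msg" for a
    using E_word that by blast
  define U where "U a\<^sub>1 = (\<Union>a \<in> {a \<in> ?Msg. a 1 = a\<^sub>1}. shadow d n (E a))" for a\<^sub>1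
  have U_in: "U a\<^sub>1 \<subseteq> ?Q" for a\<^sub>1
    unfolding U_def using shadow_subset by blast
  have U_disjoint: "U a\<^sub>1 \<inter> U a\<^sub>2 = {}" if "a\<^sub>1 \<noteq> a\<^sub>2" for a\<^sub>1 a\<^sub>2
  proof -
    have "shadow d n (E a) \<inter> shadow d n (E a') = {}"
      if "a \<in> ?Msg" "a' \<in> ?Msg" "a 1 = a\<^sub>1" "a' 1 = a\<^sub>2" for a a'
    proof (rule shadows_disjoint_if_distinguishable[OF _ E_word' E_word' G1])
      show "distinguishable (G 1) n (E a) (E a')"
        using E_dist assms(1) that \<open>a\<^sub>1 \<noteq> a\<^sub>2\<close> by auto
    qed (use that in auto)
    then show ?thesis
      unfolding U_def by blast
  qed
  have card_U: "(\<Prod>i\<in>{2..r}. real (m i)) powr (1 / s) \<le> real (card (U a\<^sub>1))" if "a\<^sub>1 < m 1" for a\<^sub>1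
  proof -
    have "(\<Prod>i\<in>{2..r}. real (m i)) \<le> real (card (patterns_in d k n (U a\<^sub>1)))"
      unfolding U_def of_nat_prod[symmetric] of_nat_le_iff
      using assms(1) that E_word' E_dist G_rest by (intro prod_le_card_patterns_in[where G = G]) auto
    also have "\<dots> \<le> real (card (U a\<^sub>1)) powr s"
      using U_in d s by (rule card_patterns_in_le)
    finally have "(\<Prod>i\<in>{2..r}. real (m i)) powr (1 / s) \<le> (real (card (U a\<^sub>1)) powr s) powr (1 / s)"
      using s by (intro powr_mono2) (auto intro: prod_nonneg)
    also have "\<dots> = real (card (U a\<^sub>1))"
      using s by (simp add: powr_powr)
    finally show ?thesis .
  qed
  have "real (m 1) * (\<Prod>i\<in>{2..r}. real (m i)) powr (1 / s) \<le> (\<Sum>a\<^sub>1<m 1. real (card (U a\<^sub>1)))"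
    using sum_mono[of "{..<m 1}", OF card_U] by simp
  also have "\<dots> = real (card (\<Union>a\<^sub>1<m 1. U a\<^sub>1))"
    using U_disjoint finite_subset[OF U_in] by (subst card_UN_disjoint) (auto simp: finite_PiE)
  also have "\<dots> \<le> real (card ?Q)"
    using U_in by (intro of_nat_mono card_mono) (auto simp: finite_PiE)
  also have "\<dots> = real d ^ n"
    by (simp add: card_PiE)
  finally show ?thesis .
qed

lemma feasible_vector_log_bound:
  assumes "1 \<le> r" "1 \<le> d" "2 * d \<le> k + 1"
    and "1 \<le> s" "real d powr s = real k + 1 - real d"
    and "\<And>a b. a < k \<Longrightarrow> b < k \<Longrightarrow> a \<noteq> b \<Longrightarrow> \<not> G 1 a b \<Longrightarrow> a < d \<and> b < d"
    and "\<And>i a b. i \<in> {2..r} \<Longrightarrow> a < d \<Longrightarrow> b < d \<Longrightarrow> a \<noteq> b \<Longrightarrow> G i a b"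
    and feasible: "feasible_vector {..<k} G r n m"
  shows "log 2 (m 1) + (\<Sum>i=2..r. log 2 (m i)) / s \<le> n * log 2 d"
proof -
  have m_pos: "0 < real (m i)" if "i \<in> {1..r}" for i
    using feasible that unfolding feasible_vector_def by fastforce
  then have prod_pos: "0 < (\<Prod>i\<in>{2..r}. real (m i))"
    by (intro prod_pos) auto
  have "log 2 (\<Prod>i\<in>{2..r}. real (m i)) = (\<Sum>i=2..r. log 2 (m i))"
    unfolding log_def using m_pos by (subst ln_prod) (auto simp: sum_divide_distrib)
  then have "log 2 (m 1) + (\<Sum>i=2..r. log 2 (m i)) / s
      = log 2 (m 1) + log 2 ((\<Prod>i\<in>{2..r}. real (m i)) powr (1 / s))"
    by (simp add: log_powr)
  also have "\<dots> = log 2 (real (m 1) * (\<Prod>i\<in>{2..r}. real (m i)) powr (1 / s))"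
    using m_pos prod_pos assms(1) by (intro log_mult_pos[symmetric]) auto
  also have "\<dots> \<le> log 2 (real d ^ n)"
    using feasible_vector_product_bound[OF assms] m_pos prod_pos assms(1,2)
    by (subst log_le_cancel_iff) auto
  also have "\<dots> = n * log 2 d"
    by (simp add: log_nat_power)
  finally show ?thesis .
qed

lemma feasible_rate_bound:
  assumes "1 \<le> r" "1 \<le> d" "2 * d \<le> k + 1"
    and "1 \<le> s" "real d powr s = real k + 1 - real d"
    and "\<And>a b. a < k \<Longrightarrow> b < k \<Longrightarrow> a \<noteq> b \<Longrightarrow> \<not> G 1 a b \<Longrightarrow> a < d \<and> b < d"
    and "\<And>i a b. i \<in> {2..r} \<Longrightarrow> a < d \<Longrightarrow> b < d \<Longrightarrow> a \<noteq> b \<Longrightarrow> G i a b"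
    and "feasible_rate {..<k} G r R"
  shows "R 1 + (\<Sum>i=2..r. R i) / s \<le> log 2 d"
proof -
  obtain N M where N: "filterlim N at_top sequentially"
    and M: "\<And>j. feasible_vector {..<k} G r (N j) (M j)"
    and lim: "\<And>i. i \<in> {1..r} \<Longrightarrow> (\<lambda>j. log 2 (M j i) / N j) \<longlonglongrightarrow> R i"
    using assms(8) unfolding feasible_rate_def by blast
  define L where "L j = log 2 (M j 1) / N j + (\<Sum>i=2..r. log 2 (M j i) / N j) / s" for j
  have "L \<longlonglongrightarrow> R 1 + (\<Sum>i=2..r. R i) / s"
    unfolding L_def using assms(1,4) by (intro tendsto_intros lim) auto
  moreover have "eventually (\<lambda>j. 1 \<le> N j) sequentially"
    using N by (simp add: filterlim_at_top)
  then have "eventually (\<lambda>j. L j \<le> log 2 d) sequentially"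
  proof eventually_elim
    case (elim j)
    have "L j = (log 2 (M j 1) + (\<Sum>i=2..r. log 2 (M j i)) / s) / N j"
      unfolding L_def by (simp add: sum_divide_distrib add_divide_distrib mult.commute)
    also have "\<dots> \<le> (N j * log 2 d) / N j"
      using feasible_vector_log_bound[OF assms(1-7) M] by (intro divide_right_mono) auto
    also have "\<dots> = log 2 d"
      using elim by simp
    finally show ?case .
  qed
  ultimately show ?thesis
    using tendsto_le[OF trivial_limit_sequentially tendsto_const] by blast
qed

theorem corollary14:
  fixes d k r :: nat and G :: "nat \<Rightarrow> nat \<Rightarrow> nat \<Rightarrow> bool"
    and R :: "nat \<Rightarrow> real" and \<alpha> :: real
  assumes "2 \<le> d" and "2 * d \<le> k + 1" and "2 \<le> r"
    and G1: "\<And>a b. G 1 a b \<longleftrightarrow>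
               a \<in> {..<k} \<and> b \<in> {..<k} \<and> a \<noteq> b \<and> (a \<notin> {..<d} \<or> b \<notin> {..<d})"
    and Gsym: "\<And>i a b. i \<in> {2..r} \<Longrightarrow> G i a b \<Longrightarrow> G i b a"
    and Gon: "\<And>i a b. i \<in> {2..r} \<Longrightarrow> G i a b \<Longrightarrow> a \<in> {..<k} \<and> b \<in> {..<k} \<and> a \<noteq> b"
    and Gcomp: "\<And>i a b. i \<in> {2..r} \<Longrightarrow> a \<in> {..<d} \<Longrightarrow> b \<in> {..<d} \<Longrightarrow> a \<noteq> b \<Longrightarrow> G i a b"
    and "0 \<le> \<alpha>" and "\<alpha> \<le> 1"
    and "R 1 = \<alpha> * log 2 (real d)"
    and "feasible_rate {..<k} G r R"
  shows "(\<Sum>i=2..r. R i) \<le> (1 - \<alpha>) * log 2 (real k - real d + 1)"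
proof -
  define s where "s = log d (real k + 1 - real d)"
  have d: "1 < real d" "real d \<le> real k + 1 - real d"
    using assms(1,2) by auto
  then have d_powr: "real d powr s = real k + 1 - real d"
    unfolding s_def by simp
  have "1 \<le> s"
    using d log_le_cancel_iff[of "real d" "real d"] unfolding s_def by fastforce
  have "R 1 + (\<Sum>i=2..r. R i) / s \<le> log 2 d"
    using assms(1-3,11) G1 Gcomp
    by (intro feasible_rate_bound[OF _ _ _ \<open>1 \<le> s\<close> d_powr, where G = G]) auto
  then have "(\<Sum>i=2..r. R i) \<le> s * ((1 - \<alpha>) * log 2 d)"
    using \<open>1 \<le> s\<close> assms(10) by (simp add: field_simps)
  also have "\<dots> = (1 - \<alpha>) * log 2 (real k - real d + 1)"
    using d unfolding s_def log_def by (simp add: field_simps)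
  finally show ?thesis .
qed

end
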